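(* Let $\mathrm{M}$ be a loopless matroid on a finite set $E$ with lattice of flats $\mathcal{L}$, and let $\vartriangleleft$ be a total order on $E$. For every $F\in\mathcal{L}$: (i) $C_\vartriangleleft(F,\hat1)=\{F\vee H: H\in C_\vartriangleleft(\hat0,\hat1)\}$; (ii) $C_\vartriangleleft(\hat0,\hat1)\cap[\hat0,F]\subseteq C_\vartriangleleft(\hat0,F)$.
   Context: Flats are ordered by inclusion, $\hat0=\varnothing$, $\hat1=E$, $F\vee H=\operatorname{cl}_{\mathrm{M}}(F\cup H)$. For flats $F\leqslant G$, writing $G\setminus F=\{e_1\vartriangleleft e_2\vartriangleleft\dots\vartriangleleft e_k\}$ and $F_i=\operatorname{cl}_{\mathrm{M}}(F\cup\{e_1,\dots,e_i\})$, the $\vartriangleleft$-chain from $F$ to $G$ is the set of flats $C_\vartriangleleft(F,G)=\{F,F_1,F_2,\dots,F_k=G\}$. *)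

theory Defs
  imports Main
begin

definition matroid :: "'a set \<Rightarrow> ('a set \<Rightarrow> bool) \<Rightarrow> bool" where
  "matroid E indep \<longleftrightarrow>
     finite E \<and> indep {} \<and>
     (\<forall>I. indep I \<longrightarrow> I \<subseteq> E) \<and>
     (\<forall>I J. indep J \<and> I \<subseteq> J \<longrightarrow> indep I) \<and>
     (\<forall>I J. indep I \<and> indep J \<and> card I < card J \<longrightarrow> (\<exists>e\<in>J - I. indep (insert e I)))"

definition mrank :: "('a set \<Rightarrow> bool) \<Rightarrow> 'a set \<Rightarrow> nat" where
  "mrank indep X = Max (card ` {I. I \<subseteq> X \<and> indep I})"

definition mcl :: "'a set \<Rightarrow> ('a set \<Rightarrow> bool) \<Rightarrow> 'a set \<Rightarrow> 'a set" where
  "mcl E indep X = {e \<in> E. mrank indep (insert e X) = mrank indep X}"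

definition loopless :: "'a set \<Rightarrow> ('a set \<Rightarrow> bool) \<Rightarrow> bool" where
  "loopless E indep \<longleftrightarrow> (\<forall>e\<in>E. indep {e})"

definition flat :: "'a set \<Rightarrow> ('a set \<Rightarrow> bool) \<Rightarrow> 'a set \<Rightarrow> bool" where
  "flat E indep F \<longleftrightarrow> F \<subseteq> E \<and> mcl E indep F = F"

text \<open>The chain C(F,G) for a total order r (reflexive relation) on E:
  writing G - F = {e_1 < ... < e_k}, F_i = cl(F \<union> {e_1..e_i}); the prefix
  {e_1..e_i} is exactly the set of elements of G - F that are r-below e_i.\<close>
definition ochain :: "'a set \<Rightarrow> ('a set \<Rightarrow> bool) \<Rightarrow> 'a rel \<Rightarrow> 'a set \<Rightarrow> 'a set \<Rightarrow> 'a set set" where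
  "ochain E indep r F G =
     insert F {mcl E indep (F \<union> {e' \<in> G - F. (e', e) \<in> r}) | e. e \<in> G - F}"

end

theory Submission
  imports Defs
begin

text \<open>
  The matroid input is the identity \<open>cl(F \<union> cl X) = cl(F \<union> X)\<close>. By it, the join of \<open>F\<close> with a step
  \<open>cl {e' \<unlhd> e}\<close> of the chain from \<open>\<emptyset>\<close> is \<open>cl(F \<union> {e' \<in> E - F. e' \<unlhd> e})\<close>; this is \<open>F\<close> when no such
  \<open>e'\<close> exists, and otherwise the step of the chain from \<open>F\<close> at the largest such \<open>e'\<close>. For (ii),
  \<open>{e' \<unlhd> e} \<subseteq> cl {e' \<unlhd> e} \<subseteq> F\<close> forces \<open>e \<in> F\<close> and \<open>{e' \<in> E. e' \<unlhd> e} = {e' \<in> F. e' \<unlhd> e}\<close>.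
\<close>

definition mbasis :: "('a set \<Rightarrow> bool) \<Rightarrow> 'a set \<Rightarrow> 'a set \<Rightarrow> bool" where
  "mbasis indep X I \<longleftrightarrow> I \<subseteq> X \<and> indep I \<and> card I = mrank indep X"

lemma mbasisD:
  assumes "mbasis indep X I"
  shows mbasis_subset: "I \<subseteq> X" and mbasis_indep: "indep I" and mbasis_card: "card I = mrank indep X"
  using assms by (simp_all add: mbasis_def)

lemma matroid_finite_subset:
  assumes "matroid E indep" "X \<subseteq> E"
  shows "finite X"
  using assms(2) by (rule finite_subset) (use assms(1) in \<open>simp add: matroid_def\<close>)

lemma matroid_indep_empty: "matroid E indep \<Longrightarrow> indep {}"
  unfolding matroid_def by blast

lemma matroid_indep_subset: "matroid E indep \<Longrightarrow> indep J \<Longrightarrow> I \<subseteq> J \<Longrightarrow> indep I"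
  unfolding matroid_def by blast

lemma matroid_augment:
  "matroid E indep \<Longrightarrow> indep I \<Longrightarrow> indep J \<Longrightarrow> card I < card J \<Longrightarrow> \<exists>e\<in>J - I. indep (insert e I)"
  unfolding matroid_def by blast

lemma finite_indep_subsets:
  assumes "matroid E indep" "X \<subseteq> E"
  shows "finite {I. I \<subseteq> X \<and> indep I}"
  by (rule finite_subset[of _ "Pow X"]) (auto simp: matroid_finite_subset[OF assms])

lemma mrank_ge_card:
  assumes "matroid E indep" "X \<subseteq> E" "I \<subseteq> X" "indep I"
  shows "card I \<le> mrank indep X"
  unfolding mrank_def using finite_indep_subsets[OF assms(1,2)] assms(3,4) by (auto intro: Max_ge)

lemma mbasis_exists:
  assumes "matroid E indep" "X \<subseteq> E"
  obtains I where "mbasis indep X I"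
proof -
  have "mrank indep X \<in> card ` {I. I \<subseteq> X \<and> indep I}"
    unfolding mrank_def using finite_indep_subsets[OF assms] matroid_indep_empty[OF assms(1)]
    by (intro Max_in) auto
  then obtain I where "I \<subseteq> X" "indep I" "card I = mrank indep X" by auto
  then show ?thesis using that by (simp add: mbasis_def)
qed

lemma mbasis_extend:
  assumes M: "matroid E indep" and XE: "X \<subseteq> E" and "I \<subseteq> X" "indep I"
  obtains J where "I \<subseteq> J" "mbasis indep X J"
proof -
  obtain J where J: "J \<subseteq> X" "indep J" "I \<subseteq> J"
    and maximal: "\<And>J'. J' \<subseteq> X \<Longrightarrow> indep J' \<Longrightarrow> J \<subseteq> J' \<Longrightarrow> J = J'"
    using finite_has_maximal2[OF finite_indep_subsets[OF M XE], of I] assms(3,4) by auto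
  obtain K where K: "mbasis indep X K" using mbasis_exists[OF M XE] .
  have "\<not> card J < card K"
  proof
    assume "card J < card K"
    then obtain e where e: "e \<in> K - J" "indep (insert e J)"
      using matroid_augment[OF M J(2) mbasis_indep[OF K]] by blast
    have "insert e J \<subseteq> X" using e(1) J(1) mbasis_subset[OF K] by blast
    then show False using maximal[of "insert e J"] e by blast
  qed
  moreover have "card J \<le> mrank indep X" using mrank_ge_card[OF M XE J(1,2)] .
  ultimately have "mbasis indep X J" using J(1,2) mbasis_card[OF K] by (simp add: mbasis_def)
  with J(3) show ?thesis using that by blast
qed

lemma mcl_subset: "mcl E indep X \<subseteq> E"
  unfolding mcl_def by auto

lemma mcl_increasing: "X \<subseteq> E \<Longrightarrow> X \<subseteq> mcl E indep X"
  unfolding mcl_def by (auto simp: insert_absorb)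

lemma flat_subset: "flat E indep F \<Longrightarrow> F \<subseteq> E"
  unfolding flat_def by blast

lemma flat_mcl_eq: "flat E indep F \<Longrightarrow> mcl E indep F = F"
  unfolding flat_def by blast

lemma not_in_mcl_iff_mbasis:
  assumes M: "matroid E indep" and XE: "X \<subseteq> E" and I: "mbasis indep X I" and "e \<in> E"
  shows "e \<notin> mcl E indep X \<longleftrightarrow> e \<notin> I \<and> indep (insert e I)"
proof
  have eXE: "insert e X \<subseteq> E" using XE \<open>e \<in> E\<close> by simp
  have finI: "finite I" using matroid_finite_subset[OF M order_trans[OF mbasis_subset[OF I] XE]] .
  assume "e \<notin> mcl E indep X"
  then have rank_ne: "mrank indep (insert e X) \<noteq> card I"
    using mbasis_card[OF I] \<open>e \<in> E\<close> unfolding mcl_def by simp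
  obtain J where J: "I \<subseteq> J" "mbasis indep (insert e X) J"
    using mbasis_extend[OF M eXE, of I] mbasis_subset[OF I] mbasis_indep[OF I] by blast
  then have "J \<noteq> I" using rank_ne mbasis_card by metis
  then obtain k where k: "k \<in> J" "k \<notin> I" using J(1) by blast
  have indep_kI: "indep (insert k I)"
    using matroid_indep_subset[OF M mbasis_indep[OF J(2)]] J(1) k(1) by blast
  have "k \<notin> X"
  proof
    assume "k \<in> X"
    then have "card (insert k I) \<le> card I"
      using mrank_ge_card[OF M XE _ indep_kI] mbasis_subset[OF I] mbasis_card[OF I] by simp
    then show False using finI k(2) by simp
  qed
  then have "k = e" using mbasis_subset[OF J(2)] k(1) by blast
  then show "e \<notin> I \<and> indep (insert e I)" using k(2) indep_kI by simp
next
  have finI: "finite I" using matroid_finite_subset[OF M order_trans[OF mbasis_subset[OF I] XE]] .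
  assume eI: "e \<notin> I \<and> indep (insert e I)"
  have "card (insert e I) \<le> mrank indep (insert e X)"
    by (rule mrank_ge_card[OF M]) (use XE \<open>e \<in> E\<close> mbasis_subset[OF I] eI in auto)
  then have "mrank indep (insert e X) \<noteq> mrank indep X" using eI finI mbasis_card[OF I] by simp
  then show "e \<notin> mcl E indep X" unfolding mcl_def by simp
qed

lemma mbasis_mcl:
  assumes M: "matroid E indep" and XE: "X \<subseteq> E" and I: "mbasis indep X I"
  shows "mbasis indep (mcl E indep X) I"
proof -
  obtain J where J: "I \<subseteq> J" "mbasis indep (mcl E indep X) J"
    using mbasis_extend[OF M mcl_subset, of I] mbasis_subset[OF I] mbasis_indep[OF I]
      mcl_increasing[OF XE] by blast
  have "J \<subseteq> I"
  proof
    fix k assume "k \<in> J"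
    then have "indep (insert k I)"
      using matroid_indep_subset[OF M mbasis_indep[OF J(2)]] J(1) by blast
    moreover have k_cl: "k \<in> mcl E indep X" using mbasis_subset[OF J(2)] \<open>k \<in> J\<close> by blast
    moreover have "k \<in> E" using k_cl mcl_subset[of E indep X] by blast
    ultimately show "k \<in> I" using not_in_mcl_iff_mbasis[OF M XE I \<open>k \<in> E\<close>] by blast
  qed
  with J(1) have "J = I" by blast
  with J(2) show ?thesis by simp
qed

lemma mcl_mcl:
  assumes M: "matroid E indep" and XE: "X \<subseteq> E"
  shows "mcl E indep (mcl E indep X) = mcl E indep X"
proof (rule set_eqI)
  obtain I where I: "mbasis indep X I" using mbasis_exists[OF M XE] .
  fix e
  show "e \<in> mcl E indep (mcl E indep X) \<longleftrightarrow> e \<in> mcl E indep X"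
  proof (cases "e \<in> E")
    case True
    show ?thesis
      using not_in_mcl_iff_mbasis[OF M XE I True]
        not_in_mcl_iff_mbasis[OF M mcl_subset mbasis_mcl[OF M XE I] True] by blast
  next
    case False
    then show ?thesis using mcl_subset[of E indep] by blast
  qed
qed

lemma mcl_mono:
  assumes M: "matroid E indep" and "X \<subseteq> Y" and YE: "Y \<subseteq> E"
  shows "mcl E indep X \<subseteq> mcl E indep Y"
proof
  have XE: "X \<subseteq> E" using assms by blast
  obtain I where I: "mbasis indep X I" using mbasis_exists[OF M XE] .
  obtain J where J: "I \<subseteq> J" "mbasis indep Y J"
    using mbasis_extend[OF M YE, of I] mbasis_subset[OF I] mbasis_indep[OF I] \<open>X \<subseteq> Y\<close> by blast
  fix e assume e: "e \<in> mcl E indep X"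
  have "e \<in> E" using e mcl_subset[of E indep X] by blast
  show "e \<in> mcl E indep Y"
  proof (rule ccontr)
    assume "e \<notin> mcl E indep Y"
    then have "e \<notin> J" "indep (insert e J)"
      using not_in_mcl_iff_mbasis[OF M YE J(2) \<open>e \<in> E\<close>] by blast+
    then have "e \<notin> I \<and> indep (insert e I)"
      using J(1) matroid_indep_subset[OF M] by blast
    then show False using e not_in_mcl_iff_mbasis[OF M XE I \<open>e \<in> E\<close>] by blast
  qed
qed

lemma mcl_Un_mcl:
  assumes M: "matroid E indep" and FE: "F \<subseteq> E" and XE: "X \<subseteq> E"
  shows "mcl E indep (F \<union> mcl E indep X) = mcl E indep (F \<union> X)"
proof
  have FXE: "F \<union> X \<subseteq> E" using FE XE by blast
  have "F \<union> X \<subseteq> F \<union> mcl E indep X" using mcl_increasing[OF XE] by blast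
  moreover have "F \<union> mcl E indep X \<subseteq> E" using FE mcl_subset[of E indep X] by blast
  ultimately show "mcl E indep (F \<union> X) \<subseteq> mcl E indep (F \<union> mcl E indep X)"
    by (rule mcl_mono[OF M])
  have "F \<union> mcl E indep X \<subseteq> mcl E indep (F \<union> X)"
    using mcl_increasing[OF FXE] mcl_mono[OF M Un_upper2 FXE] by blast
  then have "mcl E indep (F \<union> mcl E indep X) \<subseteq> mcl E indep (mcl E indep (F \<union> X))"
    by (rule mcl_mono[OF M _ mcl_subset])
  then show "mcl E indep (F \<union> mcl E indep X) \<subseteq> mcl E indep (F \<union> X)"
    by (simp only: mcl_mcl[OF M FXE])
qed

lemma linear_order_on_finite_greatest:
  assumes "linear_order_on E r" "finite A" "A \<noteq> {}" "A \<subseteq> E"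
  shows "\<exists>g\<in>A. \<forall>x\<in>A. (x, g) \<in> r"
proof -
  have "refl_on E r" "trans r" "total_on E r"
    using assms(1) unfolding order_on_defs by blast+
  then have "transp_on A (\<lambda>x y. (x, y) \<in> r)" "totalp_on A (\<lambda>x y. (x, y) \<in> r)"
    using assms(4) total_on_subset
    by (auto simp: transp_on_trans_on_eq totalp_on_total_on_eq intro: trans_on_subset)
  then obtain g where g: "g \<in> A" "\<forall>x\<in>A. x \<noteq> g \<longrightarrow> (x, g) \<in> r"
    using Finite_Set.bex_greatest_element[OF assms(2,3)] by blast
  have "(x, g) \<in> r" if "x \<in> A" for x
    using g that \<open>refl_on E r\<close> assms(4) unfolding refl_on_def by (cases "x = g") auto
  with g(1) show ?thesis by blast
qed

lemma restricted_downset_principal: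
  assumes "linear_order_on E r" "finite A" "A \<subseteq> E" "{x \<in> A. (x, e) \<in> r} \<noteq> {}"
  obtains m where "m \<in> A" "{x \<in> A. (x, e) \<in> r} = {x \<in> A. (x, m) \<in> r}"
proof -
  have fin: "finite {x \<in> A. (x, e) \<in> r}" and sub: "{x \<in> A. (x, e) \<in> r} \<subseteq> E"
    using assms(2,3) by auto
  obtain m where m: "m \<in> {x \<in> A. (x, e) \<in> r}"
    and greatest: "\<forall>x \<in> {x \<in> A. (x, e) \<in> r}. (x, m) \<in> r"
    using linear_order_on_finite_greatest[OF assms(1) fin assms(4) sub] ..
  have "trans r" using assms(1) unfolding order_on_defs by blast
  then have below_e: "(x, e) \<in> r" if "(x, m) \<in> r" for x
    using transD that m by fastforce
  have "{x \<in> A. (x, e) \<in> r} = {x \<in> A. (x, m) \<in> r}"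
  proof (rule set_eqI)
    fix x
    show "x \<in> {x \<in> A. (x, e) \<in> r} \<longleftrightarrow> x \<in> {x \<in> A. (x, m) \<in> r}"
      using greatest below_e[of x] by blast
  qed
  moreover have "m \<in> A" using m by simp
  ultimately show ?thesis using that by blast
qed

lemma ochain_empty: "ochain E indep r {} G = insert {} {mcl E indep {x \<in> G. (x, e) \<in> r} | e. e \<in> G}"
  unfolding ochain_def by simp

lemma ochain_flat_eq_joins:
  assumes M: "matroid E indep" and "linear_order_on E r" and F: "flat E indep F"
  shows "ochain E indep r F E = {mcl E indep (F \<union> H) | H. H \<in> ochain E indep r {} E}"
proof -
  have FE: "F \<subseteq> E" using flat_subset[OF F] .
  let ?D = "\<lambda>e. {x \<in> E - F. (x, e) \<in> r}"
  have join: "mcl E indep (F \<union> mcl E indep {x \<in> E. (x, e) \<in> r}) = mcl E indep (F \<union> ?D e)" for e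
  proof -
    have "F \<union> {x \<in> E. (x, e) \<in> r} = F \<union> ?D e" by blast
    then show ?thesis using mcl_Un_mcl[OF M FE, of "{x \<in> E. (x, e) \<in> r}"] by simp
  qed
  have step: "mcl E indep (F \<union> ?D e) \<in> ochain E indep r F E" for e
  proof (cases "?D e = {}")
    case True
    then have "F \<union> ?D e = F" by blast
    then show ?thesis using flat_mcl_eq[OF F] unfolding ochain_def by simp
  next
    case False
    then obtain m where "m \<in> E - F" "?D e = ?D m"
      using restricted_downset_principal[OF assms(2) matroid_finite_subset[OF M Diff_subset] Diff_subset]
      by blast
    then show ?thesis unfolding ochain_def by auto
  qed
  have "ochain E indep r F E = insert F {mcl E indep (F \<union> ?D e) | e. e \<in> E}"
  proof
    show "ochain E indep r F E \<subseteq> insert F {mcl E indep (F \<union> ?D e) | e. e \<in> E}"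
      unfolding ochain_def by blast
    show "insert F {mcl E indep (F \<union> ?D e) | e. e \<in> E} \<subseteq> ochain E indep r F E"
      using step unfolding ochain_def by blast
  qed
  also have "\<dots> = insert (mcl E indep (F \<union> {}))
      {mcl E indep (F \<union> mcl E indep {x \<in> E. (x, e) \<in> r}) | e. e \<in> E}"
    using join flat_mcl_eq[OF F] by simp
  also have "\<dots> = {mcl E indep (F \<union> H) | H. H \<in> ochain E indep r {} E}"
    unfolding ochain_empty by blast
  finally show ?thesis .
qed

lemma ochain_empty_below:
  assumes "refl_on E r" "F \<subseteq> E"
  shows "ochain E indep r {} E \<inter> {G. G \<subseteq> F} \<subseteq> ochain E indep r {} F"
proof -
  have "mcl E indep {x \<in> E. (x, e) \<in> r} \<in> ochain E indep r {} F"
    if "e \<in> E" "mcl E indep {x \<in> E. (x, e) \<in> r} \<subseteq> F" for e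
  proof -
    have below_F: "{x \<in> E. (x, e) \<in> r} \<subseteq> F"
      using that(2) mcl_increasing[of "{x \<in> E. (x, e) \<in> r}" E indep] by blast
    then have "e \<in> F" using assms(1) \<open>e \<in> E\<close> unfolding refl_on_def by blast
    moreover have "{x \<in> E. (x, e) \<in> r} = {x \<in> F. (x, e) \<in> r}" using below_F assms(2) by blast
    ultimately show ?thesis unfolding ochain_empty by auto
  qed
  then show ?thesis unfolding ochain_empty by blast
qed

theorem lemma3p4:
  assumes "matroid E indep"
    and "loopless E indep"
    and "linear_order_on E r"
    and "flat E indep F"
  shows "ochain E indep r F E = {mcl E indep (F \<union> H) | H. H \<in> ochain E indep r {} E}
         \<and> ochain E indep r {} E \<inter> {G. flat E indep G \<and> G \<subseteq> F} \<subseteq> ochain E indep r {} F"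
proof
  show "ochain E indep r F E = {mcl E indep (F \<union> H) | H. H \<in> ochain E indep r {} E}"
    using ochain_flat_eq_joins[OF assms(1,3,4)] .
  have "refl_on E r" using assms(3) unfolding order_on_defs by blast
  then show "ochain E indep r {} E \<inter> {G. flat E indep G \<and> G \<subseteq> F} \<subseteq> ochain E indep r {} F"
    using ochain_empty_below flat_subset[OF assms(4)] by blast
qed

end
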